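(* Let $N\ge 4$ and $\ell>0$. For every equilateral polygon $\mathcal{P}_N=\{y_1,\dots,y_N\}\subset\mathbb{R}^2$ with edge length $\ell$, the sum of lengths of its $2$-diagonals satisfies $\mathcal{D}_2(\mathcal{P}_N)=\sum_{i=1}^N|y_i-y_{i+2}|\le \mathcal{D}_2(\tilde{\mathcal{P}}_N)=2N\ell\cos\frac{\pi}{N}$, with equality only if $\mathcal{P}_N$ is a regular polygon; that is, property $(P_2)$ holds globally in dimension $d=2$.
   Context: A polygon is identified with the ordered set of its vertices $\{y_1,\dots,y_N\}$, indices taken mod $N$; it is equilateral with edge length $\ell$ if $|y_{i+1}-y_i|=\ell$ for all $i$. The regular polygon $\tilde{\mathcal{P}}_N$ of edge length $\ell$ is the planar convex regular $N$-gon with consecutive vertices adjacent, lying on a circle of radius $\ell\,(2\sin\frac{\pi}{N})^{-1}$, determined up to Euclidean transformations. Property $(P_2)$: the sum $\mathcal{D}_2$ of lengths of all $2$-diagonals $[y_i,y_{i+2}]$ is, among equilateral polygons with fixed edge length $\ell$, uniquely maximized (up to Euclidean transformations) by the regular polygon. *)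

theory Defs
  imports "HOL-Analysis.Analysis"
begin

text \<open>A polygon with N vertices in the plane is a map y :: nat => real^2, whose
vertices are y 0, ..., y (N-1); indices are taken mod N.\<close>

definition equilateral_polygon :: "nat \<Rightarrow> real \<Rightarrow> (nat \<Rightarrow> real^2) \<Rightarrow> bool" where
  "equilateral_polygon N l y \<longleftrightarrow> (\<forall>i<N. dist (y i) (y (Suc i mod N)) = l)"

definition diag2_sum :: "nat \<Rightarrow> (nat \<Rightarrow> real^2) \<Rightarrow> real" where
  "diag2_sum N y = (\<Sum>i<N. dist (y i) (y ((i + 2) mod N)))"

text \<open>Regular convex N-gon of edge length l, consecutive vertices adjacent, up to
Euclidean transformations (translation c, rotation angle t, orientation s).\<close>

definition regular_polygon :: "nat \<Rightarrow> real \<Rightarrow> (nat \<Rightarrow> real^2) \<Rightarrow> bool" where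
  "regular_polygon N l y \<longleftrightarrow>
     (\<exists>(c::real^2) (t::real) (s::real). s \<in> {1, -1} \<and>
        (\<forall>i<N. y i = c + (l / (2 * sin (pi / real N))) *\<^sub>R
            vector [cos (t + s * 2 * pi * real i / real N), sin (t + s * 2 * pi * real i / real N)]))"

end

theory Submission
  imports Defs
begin

(* Write the i-th edge as l (cos \<psi>_i, sin \<psi>_i), choosing the angles successively so that
   every turning angle \<psi>_(i+1) - \<psi>_i lies in [-pi, pi]. The 2-diagonal spanned by edges i
   and i+1 then has length 2 l cos(|\<psi>_(i+1) - \<psi>_i| / 2). Because the edges close up, the
   total turning is at least 2 pi: either \<psi>_N - \<psi>_0 is a nonzero multiple of 2 pi, or the
   directions do not fit into an open half-plane, so the angles range over an interval of
   length at least pi, which the closed sequence crosses twice. Concavity of cos on [0, pi/2]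
   (the tangent line at pi/N) now gives D_2 \<le> 2 N l cos(pi/N), with equality only if every
   turning angle has absolute value 2 pi/N. A non-winding sequence cannot achieve this, so
   all turns have the same sign and the polygon is regular. *)

definition polar_vec :: "real \<Rightarrow> real^2" where
  "polar_vec t = vector [cos t, sin t]"

lemma polar_vec_nth [simp]: "polar_vec t $ 1 = cos t" "polar_vec t $ 2 = sin t"
  by (simp_all add: polar_vec_def)

lemma inner_polar_vec: "polar_vec a \<bullet> polar_vec b = cos (b - a)"
  by (simp add: inner_vec_def sum_2 cos_diff)

lemma polar_vec_eq_iff: "polar_vec a = polar_vec b \<longleftrightarrow> (\<exists>k::int. a = b + 2 * pi * k)"
  by (simp add: vec_eq_iff forall_2 flip: sin_cos_eq_iff) blast

lemma polar_vec_add_pi: "polar_vec (t + pi) = - polar_vec t"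
  by (simp add: vec_eq_iff forall_2)

lemma polar_vec_diff:
  "polar_vec (m + h) - polar_vec (m - h) = (2 * sin h) *\<^sub>R polar_vec (m + pi / 2)"
  by (simp add: vec_eq_iff forall_2 sin_add sin_diff cos_add cos_diff)

lemma polar_vec_step:
  assumes "s \<in> {1, -1}"
  shows "polar_vec (a + 2 * s * h) - polar_vec a = (2 * sin h) *\<^sub>R polar_vec (a + s * (h + pi / 2))"
proof -
  have "polar_vec (a + 2 * s * h) - polar_vec a
      = polar_vec ((a + s * h) + s * h) - polar_vec ((a + s * h) - s * h)"
    by (simp add: algebra_simps)
  also have "\<dots> = (2 * sin (s * h)) *\<^sub>R polar_vec (a + s * h + pi / 2)"
    by (rule polar_vec_diff)
  also have "\<dots> = (2 * sin h) *\<^sub>R polar_vec (a + s * (h + pi / 2))"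
  proof (cases "s = 1")
    case False
    with assms have "s = -1" by simp
    then show ?thesis
      using polar_vec_add_pi[of "a - h - pi / 2"] by (simp add: algebra_simps)
  qed (simp add: add.assoc)
  finally show ?thesis .
qed

lemma norm_polar_vec_add:
  assumes "\<bar>b - a\<bar> \<le> pi"
  shows "norm (polar_vec a + polar_vec b) = 2 * cos (\<bar>b - a\<bar> / 2)"
proof -
  have "(norm (polar_vec a + polar_vec b))\<^sup>2 = 2 + 2 * cos (b - a)"
    by (simp add: power2_norm_eq_inner inner_add inner_polar_vec inner_commute)
  also have "\<dots> = 2 + 2 * cos (2 * (\<bar>b - a\<bar> / 2))"
    by (metis cos_abs_real mult_2 field_sum_of_halves)
  also have "\<dots> = (2 * cos (\<bar>b - a\<bar> / 2))\<^sup>2"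
    by (simp only: cos_double_cos) (simp add: power2_eq_square)
  finally have square: "(norm (polar_vec a + polar_vec b))\<^sup>2 = (2 * cos (\<bar>b - a\<bar> / 2))\<^sup>2" .
  have "0 \<le> 2 * cos (\<bar>b - a\<bar> / 2)"
    using assms by (intro mult_nonneg_nonneg cos_ge_zero) auto
  with square norm_ge_zero show ?thesis
    by (rule power2_eq_imp_eq)
qed

lemma exists_polar_vec:
  assumes "norm v = 1"
  obtains t where "polar_vec t = v"
proof -
  have "(v $ 1)\<^sup>2 + (v $ 2)\<^sup>2 = 1"
    using assms by (simp add: norm_eq_sqrt_inner inner_vec_def sum_2 power2_eq_square)
  then obtain t where "v $ 1 = cos t" "v $ 2 = sin t" by (rule sincos_total_2pi)
  then show thesis by (intro that) (simp add: vec_eq_iff forall_2)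
qed

lemma exists_polar_vec_near:
  assumes "norm v = 1"
  shows "\<exists>t. polar_vec t = v \<and> \<bar>t - a\<bar> \<le> pi"
proof -
  obtain t where t: "polar_vec t = v" using assms by (rule exists_polar_vec)
  define k where "k = round ((a - t) / (2 * pi))"
  have "\<bar>of_int k - (a - t) / (2 * pi)\<bar> \<le> 1 / 2"
    unfolding k_def by (rule of_int_round_abs_le)
  then have "\<bar>t + 2 * pi * k - a\<bar> \<le> pi"
    by (simp add: field_simps abs_le_iff)
  moreover have "polar_vec (t + 2 * pi * k) = v"
    using t polar_vec_eq_iff by blast
  ultimately show ?thesis by blast
qed

lemma exists_continuous_angle:
  assumes "\<And>n. norm (v n) = 1"
  obtains \<psi> where "\<And>n. polar_vec (\<psi> n) = v n" and "\<And>n. \<bar>\<psi> (Suc n) - \<psi> n\<bar> \<le> pi"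
proof -
  have "\<exists>\<psi>. \<forall>n. polar_vec (\<psi> n) = v n \<and> \<bar>\<psi> (Suc n) - \<psi> n\<bar> \<le> pi"
  proof (rule dependent_nat_choice)
    show "\<exists>t. polar_vec t = v 0" using assms by (meson exists_polar_vec)
    show "\<exists>t'. polar_vec t' = v (Suc n) \<and> \<bar>t' - t\<bar> \<le> pi" for t n
      using exists_polar_vec_near[OF assms] by blast
  qed
  then show thesis using that by blast
qed

lemma cos_less_tangent:
  fixes u c :: real
  assumes "0 \<le> u" "u \<le> pi / 2" "0 \<le> c" "c \<le> pi / 2" "u \<noteq> c"
  shows "cos u < cos c - sin c * (u - c)"
proof (cases "u < c")
  case True
  from MVT2[OF True DERIV_cos] obtain z where z: "u < z" "z < c" "cos c - cos u = (c - u) * - sin z"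
    by auto
  have "sin z < sin c" using z assms by (intro sin_monotone_2pi) auto
  with True have "(c - u) * sin z < (c - u) * sin c" by simp
  with z show ?thesis by (simp add: algebra_simps)
next
  case False
  with assms(5) have "c < u" by simp
  from MVT2[OF this DERIV_cos] obtain z where z: "c < z" "z < u" "cos u - cos c = (u - c) * - sin z"
    by auto
  have "sin c < sin z" using z assms by (intro sin_monotone_2pi) auto
  with \<open>c < u\<close> have "(u - c) * sin c < (u - c) * sin z" by simp
  with z show ?thesis by (simp add: algebra_simps)
qed

lemma cos_le_tangent:
  fixes u c :: real
  assumes "0 \<le> u" "u \<le> pi / 2" "0 \<le> c" "c \<le> pi / 2"
  shows "cos u \<le> cos c - sin c * (u - c)"
  using cos_less_tangent[OF assms] by (cases "u = c") auto

lemma sum_cos_le_card_cos: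
  fixes u :: "'a \<Rightarrow> real" and c :: real
  assumes "finite A" and "0 \<le> c" "c \<le> pi / 2"
    and u: "\<And>i. i \<in> A \<Longrightarrow> 0 \<le> u i \<and> u i \<le> pi / 2"
    and "card A * c \<le> (\<Sum>i\<in>A. u i)"
  shows "(\<Sum>i\<in>A. cos (u i)) \<le> card A * cos c"
    and "(\<Sum>i\<in>A. cos (u i)) = card A * cos c \<Longrightarrow> \<forall>i\<in>A. u i = c"
proof -
  let ?tangent = "\<lambda>i. cos c - sin c * (u i - c)"
  have "0 \<le> sin c" using assms(2,3) by (intro sin_ge_zero) auto
  with assms(5) have "sin c * (card A * c) \<le> sin c * (\<Sum>i\<in>A. u i)"
    by (rule mult_left_mono)
  then have tangent_sum: "(\<Sum>i\<in>A. ?tangent i) \<le> card A * cos c"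
    by (simp add: sum_subtractf sum_distrib_left right_diff_distrib mult.left_commute)
  have below: "cos (u i) \<le> ?tangent i" if "i \<in> A" for i
    using u[OF that] assms(2,3) by (intro cos_le_tangent) auto
  then show "(\<Sum>i\<in>A. cos (u i)) \<le> card A * cos c"
    using sum_mono[of A "\<lambda>i. cos (u i)" ?tangent] tangent_sum by simp
  show "\<forall>i\<in>A. u i = c" if "(\<Sum>i\<in>A. cos (u i)) = card A * cos c"
  proof (rule ccontr)
    assume "\<not> (\<forall>i\<in>A. u i = c)"
    then obtain j where "j \<in> A" "u j \<noteq> c" by blast
    then have "cos (u j) < ?tangent j"
      using u assms(2,3) by (intro cos_less_tangent) auto
    then have "(\<Sum>i\<in>A. cos (u i)) < (\<Sum>i\<in>A. ?tangent i)"
      using assms(1) below \<open>j \<in> A\<close> by (intro sum_strict_mono_ex1) auto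
    with that tangent_sum show False by simp
  qed
qed

lemma sum_cos_half_turns_le:
  fixes \<psi> :: "nat \<Rightarrow> real"
  assumes "N \<ge> 2" and steps: "\<And>n. \<bar>\<psi> (Suc n) - \<psi> n\<bar> \<le> pi"
    and "2 * pi \<le> (\<Sum>i<N. \<bar>\<psi> (Suc i) - \<psi> i\<bar>)"
  shows "(\<Sum>i<N. cos (\<bar>\<psi> (Suc i) - \<psi> i\<bar> / 2)) \<le> N * cos (pi / N)"
    and "(\<Sum>i<N. cos (\<bar>\<psi> (Suc i) - \<psi> i\<bar> / 2)) = N * cos (pi / N)
      \<Longrightarrow> \<forall>i<N. \<bar>\<psi> (Suc i) - \<psi> i\<bar> = 2 * pi / N"
proof -
  define u where "u i = \<bar>\<psi> (Suc i) - \<psi> i\<bar> / 2" for i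
  have "card {..<N} * (pi / N) \<le> (\<Sum>i<N. u i)"
    using assms(1,3) by (simp add: u_def flip: sum_divide_distrib)
  moreover have "0 \<le> pi / N" "pi / N \<le> pi / 2"
    using assms(1) by (auto simp: field_simps)
  moreover have "\<And>i. i \<in> {..<N} \<Longrightarrow> 0 \<le> u i \<and> u i \<le> pi / 2"
    using steps by (simp add: u_def)
  ultimately show "(\<Sum>i<N. cos (\<bar>\<psi> (Suc i) - \<psi> i\<bar> / 2)) \<le> N * cos (pi / N)"
    and "(\<Sum>i<N. cos (\<bar>\<psi> (Suc i) - \<psi> i\<bar> / 2)) = N * cos (pi / N)
      \<Longrightarrow> \<forall>i<N. \<bar>\<psi> (Suc i) - \<psi> i\<bar> = 2 * pi / N"
    using sum_cos_le_card_cos[of "{..<N}" "pi / N" u] by (auto simp: u_def)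
qed

lemma abs_diff_le_sum_abs_steps:
  fixes \<psi> :: "nat \<Rightarrow> real"
  assumes "a \<le> b"
  shows "\<bar>\<psi> b - \<psi> a\<bar> \<le> (\<Sum>i=a..<b. \<bar>\<psi> (Suc i) - \<psi> i\<bar>)"
proof -
  have "\<psi> b - \<psi> a = (\<Sum>i=a..<b. \<psi> (Suc i) - \<psi> i)"
    using sum_Suc_diff'[OF assms, of \<psi>] by simp
  also have "\<bar>\<dots>\<bar> \<le> (\<Sum>i=a..<b. \<bar>\<psi> (Suc i) - \<psi> i\<bar>)"
    by (rule sum_abs)
  finally show ?thesis .
qed

lemma same_sign_if_sum_abs_le_abs_sum:
  fixes f :: "'a \<Rightarrow> real"
  assumes "finite A" and "(\<Sum>i\<in>A. \<bar>f i\<bar>) \<le> \<bar>\<Sum>i\<in>A. f i\<bar>"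
  shows "(\<forall>i\<in>A. 0 \<le> f i) \<or> (\<forall>i\<in>A. f i \<le> 0)"
proof (cases "0 \<le> (\<Sum>i\<in>A. f i)")
  case True
  with assms(2) sum_abs[of f A] have "(\<Sum>i\<in>A. \<bar>f i\<bar> - f i) = 0"
    by (simp add: sum_subtractf)
  with assms(1) have "\<forall>i\<in>A. \<bar>f i\<bar> - f i = 0"
    by (subst (asm) sum_nonneg_eq_0_iff) auto
  then show ?thesis by (metis abs_ge_zero eq_iff_diff_eq_0)
next
  case False
  with assms(2) sum_abs[of f A] have "(\<Sum>i\<in>A. \<bar>f i\<bar> + f i) = 0"
    by (simp add: sum.distrib)
  with assms(1) have "\<forall>i\<in>A. \<bar>f i\<bar> + f i = 0"
    by (subst (asm) sum_nonneg_eq_0_iff) auto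
  then show ?thesis by (metis abs_ge_zero add.commute add_eq_0_iff neg_0_le_iff_le)
qed

lemma sum_cos_diff_eq_0:
  assumes "(\<Sum>i\<in>A. polar_vec (\<psi> i)) = 0"
  shows "(\<Sum>i\<in>A. cos (\<psi> i - c)) = 0"
proof -
  have "(\<Sum>i\<in>A. cos (\<psi> i - c)) = polar_vec c \<bullet> (\<Sum>i\<in>A. polar_vec (\<psi> i))"
    by (simp add: inner_sum_right inner_polar_vec)
  with assms show ?thesis by simp
qed

lemma angle_range_ge_pi:
  fixes \<psi> :: "nat \<Rightarrow> real"
  assumes "N > 0" and "(\<Sum>i<N. polar_vec (\<psi> i)) = 0"
  shows "pi \<le> Max (\<psi> ` {..<N}) - Min (\<psi> ` {..<N})"
proof (rule ccontr)
  let ?M = "Max (\<psi> ` {..<N})" and ?m = "Min (\<psi> ` {..<N})"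
  assume "\<not> ?thesis"
  then have narrow: "?M - ?m < pi" by simp
  have "0 < (\<Sum>i<N. cos (\<psi> i - (?M + ?m) / 2))"
  proof (rule sum_pos)
    fix i assume "i \<in> {..<N}"
    then have "\<psi> i \<le> ?M" "?m \<le> \<psi> i" by auto
    with narrow show "0 < cos (\<psi> i - (?M + ?m) / 2)"
      by (intro cos_gt_zero_pi) (auto simp: field_simps)
  qed (use assms in auto)
  with sum_cos_diff_eq_0[OF assms(2)] show False by simp
qed

lemma angle_range_le_half_variation:
  fixes \<psi> :: "nat \<Rightarrow> real"
  assumes "N > 0" and "\<psi> N = \<psi> 0"
  shows "2 * (Max (\<psi> ` {..<N}) - Min (\<psi> ` {..<N})) \<le> (\<Sum>i<N. \<bar>\<psi> (Suc i) - \<psi> i\<bar>)"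
proof -
  have ne: "\<psi> ` {..<N} \<noteq> {}" using assms by auto
  obtain p where p: "p < N" "\<psi> p = Max (\<psi> ` {..<N})" using Max_in[OF _ ne] by auto
  obtain q where q: "q < N" "\<psi> q = Min (\<psi> ` {..<N})" using Min_in[OF _ ne] by auto
  define a b where "a = min p q" and "b = max p q"
  have ab: "a \<le> b" "b \<le> N" using p q unfolding a_def b_def by auto
  have "Min (\<psi> ` {..<N}) \<le> Max (\<psi> ` {..<N})"
    using p(1) by (simp flip: p(2))
  then have span: "Max (\<psi> ` {..<N}) - Min (\<psi> ` {..<N}) = \<bar>\<psi> b - \<psi> a\<bar>"
    using p q unfolding a_def b_def
    by (cases "p \<le> q") (auto simp: min_def max_def)
  let ?f = "\<lambda>i. \<bar>\<psi> (Suc i) - \<psi> i\<bar>"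
  have "2 * \<bar>\<psi> b - \<psi> a\<bar> \<le> \<bar>\<psi> a - \<psi> 0\<bar> + \<bar>\<psi> b - \<psi> a\<bar> + \<bar>\<psi> N - \<psi> b\<bar>"
    using assms(2) by (smt (verit))
  also have "\<dots> \<le> sum ?f {0..<a} + sum ?f {a..<b} + sum ?f {b..<N}"
    using ab by (intro add_mono abs_diff_le_sum_abs_steps) auto
  also have "\<dots> = (\<Sum>i<N. ?f i)"
    using ab by (simp add: sum.atLeastLessThan_concat atLeast0LessThan[symmetric])
  finally show ?thesis using span by simp
qed

lemma winding_abs_ge_2pi:
  fixes \<psi> :: "nat \<Rightarrow> real" and k :: int
  assumes "\<psi> N = \<psi> 0 + 2 * pi * k" and "k \<noteq> 0"
  shows "2 * pi \<le> \<bar>\<psi> N - \<psi> 0\<bar>"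
proof -
  have "1 \<le> \<bar>real_of_int k\<bar>" using assms(2) by linarith
  then have "2 * pi * 1 \<le> 2 * pi * \<bar>real_of_int k\<bar>" by (intro mult_left_mono) auto
  with assms(1) show ?thesis by (simp add: abs_mult)
qed

lemma total_variation_ge_2pi:
  fixes \<psi> :: "nat \<Rightarrow> real" and k :: int
  assumes "N > 0" and "(\<Sum>i<N. polar_vec (\<psi> i)) = 0" and "\<psi> N = \<psi> 0 + 2 * pi * k"
  shows "2 * pi \<le> (\<Sum>i<N. \<bar>\<psi> (Suc i) - \<psi> i\<bar>)"
proof (cases "k = 0")
  case True
  then show ?thesis
    using angle_range_le_half_variation[of N \<psi>] angle_range_ge_pi[OF assms(1,2)] assms by simp
next
  case False
  then show ?thesis
    using abs_diff_le_sum_abs_steps[of 0 N \<psi>] winding_abs_ge_2pi[OF assms(3)]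
    by (simp add: atLeast0LessThan)
qed

lemma antipodal_if_total_variation_le_2pi:
  fixes \<psi> :: "nat \<Rightarrow> real"
  assumes "N > 0" and "(\<Sum>i<N. polar_vec (\<psi> i)) = 0" and "\<psi> N = \<psi> 0"
    and "(\<Sum>i<N. \<bar>\<psi> (Suc i) - \<psi> i\<bar>) \<le> 2 * pi"
  obtains c where "\<And>i. i < N \<Longrightarrow> \<bar>\<psi> i - c\<bar> = pi / 2"
proof
  let ?M = "Max (\<psi> ` {..<N})" and ?m = "Min (\<psi> ` {..<N})"
  define c where "c = ?m + pi / 2"
  have span: "?M - ?m = pi"
    using angle_range_le_half_variation[OF assms(1,3)] angle_range_ge_pi[OF assms(1,2)] assms(4)
    by simp
  have bounds: "\<bar>\<psi> i - c\<bar> \<le> pi / 2" if "i < N" for i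
  proof -
    have "\<psi> i \<le> ?M" "?m \<le> \<psi> i" using that by auto
    with span show ?thesis unfolding abs_le_iff c_def by linarith
  qed
  have "\<forall>i\<in>{..<N}. 0 \<le> cos (\<psi> i - c)"
  proof
    fix i assume "i \<in> {..<N}"
    with bounds have "- (pi / 2) \<le> \<psi> i - c \<and> \<psi> i - c \<le> pi / 2"
      unfolding abs_le_iff by force
    then show "0 \<le> cos (\<psi> i - c)" by (intro cos_ge_zero) auto
  qed
  with sum_cos_diff_eq_0[OF assms(2), of c] have cos_0: "\<forall>i\<in>{..<N}. cos (\<psi> i - c) = 0"
    by (subst (asm) sum_nonneg_eq_0_iff) auto
  show "\<bar>\<psi> i - c\<bar> = pi / 2" if "i < N" for i
  proof (rule ccontr)
    assume "\<bar>\<psi> i - c\<bar> \<noteq> pi / 2"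
    with bounds[OF that] have "- (pi / 2) < \<psi> i - c" "\<psi> i - c < pi / 2"
      by (auto simp: abs_if split: if_splits)
    then have "0 < cos (\<psi> i - c)" by (rule cos_gt_zero_pi)
    with cos_0 that show False by simp
  qed
qed

lemma constant_turn_if_equal_abs_steps:
  fixes \<psi> :: "nat \<Rightarrow> real" and k :: int
  assumes "N \<ge> 3" and "(\<Sum>i<N. polar_vec (\<psi> i)) = 0" and "\<psi> N = \<psi> 0 + 2 * pi * k"
    and steps: "\<And>i. i < N \<Longrightarrow> \<bar>\<psi> (Suc i) - \<psi> i\<bar> = 2 * pi / N"
  obtains s :: real where "s \<in> {1, -1}" and "\<And>i. i < N \<Longrightarrow> \<psi> (Suc i) - \<psi> i = s * (2 * pi / N)"
proof -
  have step_pos: "0 < 2 * pi / N" and step_lt: "2 * pi / N < pi"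
    using assms(1) by (auto simp: field_simps)
  have variation: "(\<Sum>i<N. \<bar>\<psi> (Suc i) - \<psi> i\<bar>) = 2 * pi"
    using assms(1) steps by simp
  have "k \<noteq> 0" \<comment> \<open>otherwise only two antipodal directions occur, but steps are in (0, pi)\<close>
  proof
    assume "k = 0"
    then obtain c where c: "\<And>i. i < N \<Longrightarrow> \<bar>\<psi> i - c\<bar> = pi / 2"
      using antipodal_if_total_variation_le_2pi[OF _ assms(2)] assms(1,3) variation by force
    have "\<bar>\<psi> 0 - c\<bar> = pi / 2" "\<bar>\<psi> 1 - c\<bar> = pi / 2"
      using c assms(1) by auto
    then have "\<bar>\<psi> 1 - \<psi> 0\<bar> = 0 \<or> \<bar>\<psi> 1 - \<psi> 0\<bar> = pi"
      using pi_gt_zero by (auto simp: abs_if split: if_splits)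
    with steps[of 0] step_pos step_lt assms(1) show False by auto
  qed
  have "(\<Sum>i<N. \<psi> (Suc i) - \<psi> i) = \<psi> N - \<psi> 0"
    by (rule sum_lessThan_telescope)
  then have "(\<Sum>i<N. \<bar>\<psi> (Suc i) - \<psi> i\<bar>) \<le> \<bar>\<Sum>i<N. \<psi> (Suc i) - \<psi> i\<bar>"
    using winding_abs_ge_2pi[OF assms(3) \<open>k \<noteq> 0\<close>] variation by simp
  then consider "\<forall>i<N. 0 \<le> \<psi> (Suc i) - \<psi> i" | "\<forall>i<N. \<psi> (Suc i) - \<psi> i \<le> 0"
    using same_sign_if_sum_abs_le_abs_sum[of "{..<N}" "\<lambda>i. \<psi> (Suc i) - \<psi> i"] by auto
  then show thesis
  proof cases
    case 1
    show thesis
    proof (rule that[of 1])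
      fix i assume "i < N"
      with 1 steps[OF this] show "\<psi> (Suc i) - \<psi> i = 1 * (2 * pi / N)" by simp
    qed simp
  next
    case 2
    show thesis
    proof (rule that[of "-1"])
      fix i assume "i < N"
      with 2 steps[OF this] show "\<psi> (Suc i) - \<psi> i = -1 * (2 * pi / N)" by simp
    qed simp
  qed
qed

lemma sum_lessThan_Suc_mod:
  assumes "N > 0"
  shows "(\<Sum>i<N. g (Suc i mod N)) = (\<Sum>i<N. g i)"
proof -
  obtain M where M: "N = Suc M" using assms by (cases N) auto
  have "(\<Sum>i<Suc M. g (Suc i mod Suc M)) = (\<Sum>i<M. g (Suc i)) + g 0"
    by simp
  also have "\<dots> = (\<Sum>i<Suc M. g i)"
    by (simp only: sum.lessThan_Suc_shift add.commute)
  finally show ?thesis using M by simp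
qed

(* \<psi> lifts the edge directions to all of nat without reduction mod N, so \<psi> N - \<psi> 0 is
   2 pi times the winding number of the edges. *)
definition edge_angles :: "nat \<Rightarrow> real \<Rightarrow> (nat \<Rightarrow> real^2) \<Rightarrow> (nat \<Rightarrow> real) \<Rightarrow> bool" where
  "edge_angles N l y \<psi> \<longleftrightarrow> (\<forall>n. y (Suc n mod N) - y (n mod N) = l *\<^sub>R polar_vec (\<psi> n))"

lemma equilateral_polygon_edge_angles:
  assumes "N > 0" and "l > 0" and "equilateral_polygon N l y"
  obtains \<psi> where "edge_angles N l y \<psi>" and "\<And>n. \<bar>\<psi> (Suc n) - \<psi> n\<bar> \<le> pi"
proof -
  define e where "e n = y (Suc n mod N) - y (n mod N)" for n
  have "norm (e n) = l" for n
  proof -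
    have "dist (y (n mod N)) (y (Suc (n mod N) mod N)) = l"
      using assms(1,3) by (simp add: equilateral_polygon_def)
    then show ?thesis
      unfolding e_def by (metis dist_commute dist_norm mod_Suc_eq)
  qed
  with assms(2) have "\<And>n. norm (e n /\<^sub>R l) = 1"
    by simp
  then obtain \<psi> where angle: "\<And>n. polar_vec (\<psi> n) = e n /\<^sub>R l"
    and steps: "\<And>n. \<bar>\<psi> (Suc n) - \<psi> n\<bar> \<le> pi"
    using exists_continuous_angle[where v = "\<lambda>n. e n /\<^sub>R l"] by blast
  have "edge_angles N l y \<psi>"
    unfolding edge_angles_def using assms(2) by (simp add: angle flip: e_def)
  then show thesis using steps by (rule that)
qed

context
  fixes N :: nat and l :: real and y :: "nat \<Rightarrow> real^2" and \<psi> :: "nat \<Rightarrow> real"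
  assumes angles: "edge_angles N l y \<psi>"
begin

lemma edge_angles_edge: "y (Suc n mod N) - y (n mod N) = l *\<^sub>R polar_vec (\<psi> n)"
  using angles by (simp add: edge_angles_def)

lemma sum_polar_vec_edge_angles:
  assumes "N > 0" and "l \<noteq> 0"
  shows "(\<Sum>i<N. polar_vec (\<psi> i)) = 0"
proof -
  have "l *\<^sub>R (\<Sum>i<N. polar_vec (\<psi> i)) = (\<Sum>i<N. y (Suc i mod N) - y i)"
    by (simp add: scaleR_sum_right flip: edge_angles_edge)
  also have "\<dots> = 0"
    using sum_lessThan_Suc_mod[OF assms(1), of y] by (simp add: sum_subtractf)
  finally show ?thesis using assms(2) by simp
qed

lemma edge_angles_winding:
  assumes "l \<noteq> 0"
  obtains k :: int where "\<psi> N = \<psi> 0 + 2 * pi * k"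
proof -
  have "Suc N mod N = Suc 0 mod N" "N mod N = 0 mod N"
    by (metis mod_Suc_eq mod_self) simp
  then have "l *\<^sub>R polar_vec (\<psi> N) = l *\<^sub>R polar_vec (\<psi> 0)"
    using edge_angles_edge[of N] edge_angles_edge[of 0] by metis
  with assms have "polar_vec (\<psi> N) = polar_vec (\<psi> 0)" by simp
  then show thesis using that by (auto simp: polar_vec_eq_iff)
qed

lemma diag2_sum_edge_angles:
  assumes "l \<ge> 0" and steps: "\<And>n. \<bar>\<psi> (Suc n) - \<psi> n\<bar> \<le> pi"
  shows "diag2_sum N y = 2 * l * (\<Sum>i<N. cos (\<bar>\<psi> (Suc i) - \<psi> i\<bar> / 2))"
  unfolding diag2_sum_def sum_distrib_left
proof (rule sum.cong)
  fix i assume "i \<in> {..<N}"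
  then have "y ((i + 2) mod N) - y i
      = (y (Suc (Suc i) mod N) - y (Suc i mod N)) + (y (Suc i mod N) - y (i mod N))"
    by simp
  also have "\<dots> = l *\<^sub>R (polar_vec (\<psi> i) + polar_vec (\<psi> (Suc i)))"
    by (simp add: edge_angles_edge scaleR_add_right)
  finally have "dist (y i) (y ((i + 2) mod N)) = norm (l *\<^sub>R (polar_vec (\<psi> i) + polar_vec (\<psi> (Suc i))))"
    by (metis dist_commute dist_norm)
  then show "dist (y i) (y ((i + 2) mod N)) = 2 * l * cos (\<bar>\<psi> (Suc i) - \<psi> i\<bar> / 2)"
    using assms(1) steps[of i] by (simp add: norm_polar_vec_add)
qed simp

lemma regular_polygon_if_constant_turn:
  assumes "N \<ge> 2" and "s \<in> {1, -1}"
    and turn: "\<And>i. i < N \<Longrightarrow> \<psi> (Suc i) - \<psi> i = s * (2 * pi / N)"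
  shows "regular_polygon N l y"
proof -
  define R where "R = l / (2 * sin (pi / N))"
  \<comment> \<open>vertex i lies at angle t + 2 pi s i / N on the circumcircle, so the edge leaving it
      points in direction t + 2 pi s i / N + s (pi / N + pi / 2) = \<psi> i\<close>
  define t where "t = \<psi> 0 - s * (pi / N + pi / 2)"
  define c where "c = y 0 - R *\<^sub>R polar_vec t"
  have "0 < sin (pi / N)"
    using assms(1) by (intro sin_gt_zero) (auto simp: field_simps)
  then have R: "R * (2 * sin (pi / N)) = l" by (simp add: R_def)
  have angle: "\<psi> i = \<psi> 0 + s * 2 * pi * i / N" if "i \<le> N" for i
    using that
  proof (induction i)
    case (Suc i)
    then have "\<psi> (Suc i) = \<psi> i + s * (2 * pi / N)" using turn[of i] by simp
    with Suc show ?case by (simp add: field_simps)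
  qed simp
  have "y i = c + R *\<^sub>R polar_vec (t + s * 2 * pi * i / N)" if "i < N" for i
    using that
  proof (induction i)
    case (Suc i)
    have next_angle: "t + s * 2 * pi * i / N + 2 * s * (pi / N) = t + s * 2 * pi * Suc i / N"
      using assms(1) by (simp add: field_simps)
    have edge_angle: "t + s * 2 * pi * i / N + s * (pi / N + pi / 2) = \<psi> i"
      using angle[of i] Suc.prems by (simp add: t_def algebra_simps)
    have "polar_vec (t + s * 2 * pi * Suc i / N) - polar_vec (t + s * 2 * pi * i / N)
        = (2 * sin (pi / N)) *\<^sub>R polar_vec (\<psi> i)"
      using polar_vec_step[OF assms(2), of "t + s * 2 * pi * i / N" "pi / N"]
      unfolding next_angle edge_angle .
    moreover have "y (Suc i) - y i = l *\<^sub>R polar_vec (\<psi> i)"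
      using edge_angles_edge[of i] Suc.prems by simp
    ultimately show ?case
      using Suc R by (simp add: algebra_simps flip: scaleR_diff_right)
  qed (simp add: c_def)
  with assms(2) show ?thesis
    unfolding regular_polygon_def R_def polar_vec_def by blast
qed

end

theorem proposition5p1:
  fixes N :: nat and l :: real and y :: "nat \<Rightarrow> real^2"
  assumes "N \<ge> 4" and "l > 0" and "equilateral_polygon N l y"
  shows "diag2_sum N y \<le> 2 * real N * l * cos (pi / real N) \<and>
         (diag2_sum N y = 2 * real N * l * cos (pi / real N) \<longrightarrow> regular_polygon N l y)"
proof -
  have "N > 0" using assms(1) by simp
  obtain \<psi> where angles: "edge_angles N l y \<psi>"
    and steps: "\<And>n. \<bar>\<psi> (Suc n) - \<psi> n\<bar> \<le> pi"
    using equilateral_polygon_edge_angles[OF \<open>N > 0\<close> assms(2,3)] by blast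
  have closed: "(\<Sum>i<N. polar_vec (\<psi> i)) = 0"
    using sum_polar_vec_edge_angles[OF angles \<open>N > 0\<close>] assms(2) by simp
  obtain k :: int where k: "\<psi> N = \<psi> 0 + 2 * pi * k"
    using edge_angles_winding[OF angles] assms(2) by auto
  note turns = sum_cos_half_turns_le[OF _ steps total_variation_ge_2pi[OF \<open>N > 0\<close> closed k]]
  have diag: "diag2_sum N y = 2 * l * (\<Sum>i<N. cos (\<bar>\<psi> (Suc i) - \<psi> i\<bar> / 2))"
    using diag2_sum_edge_angles[OF angles] steps assms(2) by simp
  show ?thesis
  proof (intro conjI impI)
    show "diag2_sum N y \<le> 2 * real N * l * cos (pi / real N)"
      using turns(1) assms(1,2) by (simp add: diag)
    assume "diag2_sum N y = 2 * real N * l * cos (pi / real N)"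
    then have "\<forall>i<N. \<bar>\<psi> (Suc i) - \<psi> i\<bar> = 2 * pi / N"
      using turns(2) assms(1,2) by (simp add: diag)
    moreover have "N \<ge> 3" using assms(1) by simp
    ultimately obtain s :: real
      where "s \<in> {1, -1}" and "\<And>i. i < N \<Longrightarrow> \<psi> (Suc i) - \<psi> i = s * (2 * pi / N)"
      using constant_turn_if_equal_abs_steps[OF _ closed k] by blast
    moreover have "N \<ge> 2" using assms(1) by simp
    ultimately show "regular_polygon N l y"
      using regular_polygon_if_constant_turn[OF angles] by blast
  qed
qed

end
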